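(* Consider the ride-hailing model in the context. The optimal value of $\mathcal{OPT}$ (the optimal platform profit), viewed as a function of the AV fleet mass $M$ and of the CV fleet mass $N$ with all other parameters fixed, is non-decreasing in $M$ and non-decreasing in $N$.
   Context: Model. There are $L$ regions $\{1,\dots,L\}$. For regions $i,j$, $b_{ij}\ge0$ is the customer rate from $i$ to $j$; $b_i=\sum_j b_{ij}$ (assumed $>0$), $q_{ij}=b_{ij}/b_i$. Travel times satisfy $t_{ij}>0$ for $i\ne j$, $t_{ii}=0$. Constants: $p>0$, $c\ge0$, $R\in(0,1)$, CV fleet mass $N>0$, AV fleet mass $M\ge0$. For $i,\alpha$: $\tau^{dr}_{i\alpha}=t_{i\alpha}+\sum_j q_{\alpha j}t_{\alpha j}$, $r^A_{i\alpha}=p\sum_j q_{\alpha j}t_{\alpha j}-c\tau^{dr}_{i\alpha}$, $r^C_{i\alpha}=p(1-R)\sum_j q_{\alpha j}t_{\alpha j}-c\tau^{dr}_{i\alpha}$, $r^{C2P}_{i\alpha}=pR\sum_j q_{\alpha j}t_{\alpha j}$. A matrix $\bm x\in\mathbb R^{L\times L}_{\ge0}$ satisfies flow balance if $\sum_j(\sum_k x_{kj})q_{ji}=\sum_\alpha x_{i\alpha}$ for all $i$. $\mathcal{CV}(\bm b^C)$: maximize $N\log\sum_{i,\alpha}r^C_{i\alpha}x_{i\alpha}-\sum_{i,\alpha}\tau^{dr}_{i\alpha}x_{i\alpha}$ over $\bm x\ge0$ satisfying flow balance and $\sum_j x_{ji}\le b^C_i$ for all $i$; $\pi(\bm b^C)=\sum_{i,\alpha}r^{C2P}_{i\alpha}x_{i\alpha}$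 for an optimal solution $\bm x$ (same for all optimal solutions). $\mathcal{OPT}$: maximize $\sum_{i,\alpha}r^A_{i\alpha}x^A_{i\alpha}+\pi(\bm b^C)$ over $\bm b^C\in\mathbb R^L_{\ge0}$, $\bm x^A\in\mathbb R^{L\times L}_{\ge0}$ subject to $\sum_j x^A_{ji}+b^C_i\le b_i$ for all $i$, flow balance for $\bm x^A$, and $\sum_{i,\alpha}\tau^{dr}_{i\alpha}x^A_{i\alpha}\le M$. *)

theory Defs
  imports "HOL-Analysis.Analysis" "HOL-Library.Extended_Real"
begin

(* Regions are the elements of a finite type 'l. *)

definition bsum :: "('l::finite \<Rightarrow> 'l \<Rightarrow> real) \<Rightarrow> 'l \<Rightarrow> real" where
  "bsum b i = (\<Sum>j\<in>UNIV. b i j)"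

definition qq :: "('l::finite \<Rightarrow> 'l \<Rightarrow> real) \<Rightarrow> 'l \<Rightarrow> 'l \<Rightarrow> real" where
  "qq b i j = b i j / bsum b i"

(* expected trip time from alpha: sum_j q_{alpha j} t_{alpha j} *)
definition trip :: "('l::finite \<Rightarrow> 'l \<Rightarrow> real) \<Rightarrow> ('l \<Rightarrow> 'l \<Rightarrow> real) \<Rightarrow> 'l \<Rightarrow> real" where
  "trip b t \<alpha> = (\<Sum>j\<in>UNIV. qq b \<alpha> j * t \<alpha> j)"

definition tau_dr :: "('l::finite \<Rightarrow> 'l \<Rightarrow> real) \<Rightarrow> ('l \<Rightarrow> 'l \<Rightarrow> real) \<Rightarrow> 'l \<Rightarrow> 'l \<Rightarrow> real" where
  "tau_dr b t i \<alpha> = t i \<alpha> + trip b t \<alpha>"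

definition rA :: "real \<Rightarrow> real \<Rightarrow> ('l::finite \<Rightarrow> 'l \<Rightarrow> real) \<Rightarrow> ('l \<Rightarrow> 'l \<Rightarrow> real) \<Rightarrow> 'l \<Rightarrow> 'l \<Rightarrow> real" where
  "rA p c b t i \<alpha> = p * trip b t \<alpha> - c * tau_dr b t i \<alpha>"

definition rC :: "real \<Rightarrow> real \<Rightarrow> real \<Rightarrow> ('l::finite \<Rightarrow> 'l \<Rightarrow> real) \<Rightarrow> ('l \<Rightarrow> 'l \<Rightarrow> real) \<Rightarrow> 'l \<Rightarrow> 'l \<Rightarrow> real" where
  "rC p c R b t i \<alpha> = p * (1 - R) * trip b t \<alpha> - c * tau_dr b t i \<alpha>"

definition rC2P :: "real \<Rightarrow> real \<Rightarrow> ('l::finite \<Rightarrow> 'l \<Rightarrow> real) \<Rightarrow> ('l \<Rightarrow> 'l \<Rightarrow> real) \<Rightarrow> 'l \<Rightarrow> 'l \<Rightarrow> real" where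
  "rC2P p R b t i \<alpha> = p * R * trip b t \<alpha>"

definition flow_balance :: "('l::finite \<Rightarrow> 'l \<Rightarrow> real) \<Rightarrow> ('l \<Rightarrow> 'l \<Rightarrow> real) \<Rightarrow> bool" where
  "flow_balance b x \<longleftrightarrow>
     (\<forall>i. (\<Sum>j\<in>UNIV. (\<Sum>k\<in>UNIV. x k j) * qq b j i) = (\<Sum>\<alpha>\<in>UNIV. x i \<alpha>))"

definition cv_feasible :: "('l::finite \<Rightarrow> 'l \<Rightarrow> real) \<Rightarrow> ('l \<Rightarrow> real) \<Rightarrow> ('l \<Rightarrow> 'l \<Rightarrow> real) \<Rightarrow> bool" where
  "cv_feasible b bC x \<longleftrightarrow>
     (\<forall>i \<alpha>. 0 \<le> x i \<alpha>) \<and> flow_balance b x \<and> (\<forall>i. (\<Sum>j\<in>UNIV. x j i) \<le> bC i)"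

definition cv_obj :: "real \<Rightarrow> real \<Rightarrow> real \<Rightarrow> ('l::finite \<Rightarrow> 'l \<Rightarrow> real) \<Rightarrow> ('l \<Rightarrow> 'l \<Rightarrow> real)
    \<Rightarrow> real \<Rightarrow> ('l \<Rightarrow> 'l \<Rightarrow> real) \<Rightarrow> ereal" where
  "cv_obj p c R b t N x =
     (let u = (\<Sum>i\<in>UNIV. \<Sum>\<alpha>\<in>UNIV. rC p c R b t i \<alpha> * x i \<alpha>);
          v = (\<Sum>i\<in>UNIV. \<Sum>\<alpha>\<in>UNIV. tau_dr b t i \<alpha> * x i \<alpha>)
      in if 0 < u then ereal (N * ln u - v) else -\<infinity>)"

definition cv_optimal :: "real \<Rightarrow> real \<Rightarrow> real \<Rightarrow> ('l::finite \<Rightarrow> 'l \<Rightarrow> real) \<Rightarrow> ('l \<Rightarrow> 'l \<Rightarrow> real)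
    \<Rightarrow> real \<Rightarrow> ('l \<Rightarrow> real) \<Rightarrow> ('l \<Rightarrow> 'l \<Rightarrow> real) \<Rightarrow> bool" where
  "cv_optimal p c R b t N bC x \<longleftrightarrow>
     cv_feasible b bC x \<and>
     (\<forall>y. cv_feasible b bC y \<longrightarrow> cv_obj p c R b t N y \<le> cv_obj p c R b t N x)"

definition cv_pi :: "real \<Rightarrow> real \<Rightarrow> real \<Rightarrow> ('l::finite \<Rightarrow> 'l \<Rightarrow> real) \<Rightarrow> ('l \<Rightarrow> 'l \<Rightarrow> real)
    \<Rightarrow> real \<Rightarrow> ('l \<Rightarrow> real) \<Rightarrow> real" where
  "cv_pi p c R b t N bC =
     (let x = (SOME x. cv_optimal p c R b t N bC x)
      in (\<Sum>i\<in>UNIV. \<Sum>\<alpha>\<in>UNIV. rC2P p R b t i \<alpha> * x i \<alpha>))"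

definition opt_feasible :: "('l::finite \<Rightarrow> 'l \<Rightarrow> real) \<Rightarrow> ('l \<Rightarrow> 'l \<Rightarrow> real) \<Rightarrow> real
    \<Rightarrow> ('l \<Rightarrow> real) \<Rightarrow> ('l \<Rightarrow> 'l \<Rightarrow> real) \<Rightarrow> bool" where
  "opt_feasible b t M bC xA \<longleftrightarrow>
     (\<forall>i. 0 \<le> bC i) \<and> (\<forall>i \<alpha>. 0 \<le> xA i \<alpha>) \<and>
     (\<forall>i. (\<Sum>j\<in>UNIV. xA j i) + bC i \<le> bsum b i) \<and>
     flow_balance b xA \<and>
     (\<Sum>i\<in>UNIV. \<Sum>\<alpha>\<in>UNIV. tau_dr b t i \<alpha> * xA i \<alpha>) \<le> M"

definition opt_obj :: "real \<Rightarrow> real \<Rightarrow> real \<Rightarrow> ('l::finite \<Rightarrow> 'l \<Rightarrow> real) \<Rightarrow> ('l \<Rightarrow> 'l \<Rightarrow> real)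
    \<Rightarrow> real \<Rightarrow> ('l \<Rightarrow> real) \<Rightarrow> ('l \<Rightarrow> 'l \<Rightarrow> real) \<Rightarrow> real" where
  "opt_obj p c R b t N bC xA =
     (\<Sum>i\<in>UNIV. \<Sum>\<alpha>\<in>UNIV. rA p c b t i \<alpha> * xA i \<alpha>) + cv_pi p c R b t N bC"

definition opt_value :: "real \<Rightarrow> real \<Rightarrow> real \<Rightarrow> ('l::finite \<Rightarrow> 'l \<Rightarrow> real) \<Rightarrow> ('l \<Rightarrow> 'l \<Rightarrow> real)
    \<Rightarrow> real \<Rightarrow> real \<Rightarrow> real" where
  "opt_value p c R b t N M =
     Sup {opt_obj p c R b t N bC xA | bC xA. opt_feasible b t M bC xA}"

end

theory Submission
  imports Defs
begin

(* Raising M only enlarges the feasible set of OPT, so its supremum cannot decrease.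
   For N, fix the CV demand bC and compare an optimal CV solution x at N with one, x', at N' > N:
   adding the two optimality inequalities for N log U - V gives (N' - N)(log U x' - log U x) >= 0,
   so the income U and then the driving time V both grow from x to x'.  Since the trip volume
   is (U + c V) / (p (1 - R)) and pi is p R times it, pi grows with N, and every objective
   value of OPT at N is dominated by one at N'.  Optimal CV solutions exist because the CV
   feasible set is a compact polytope and N log U - V is continuous where U stays above the
   level reached by any fixed feasible point of positive income. *)

definition log_surplus :: "real \<Rightarrow> ('a \<Rightarrow> real) \<Rightarrow> ('a \<Rightarrow> real) \<Rightarrow> 'a \<Rightarrow> ereal" where
  "log_surplus N U V x = (if 0 < U x then ereal (N * ln (U x) - V x) else -\<infinity>)"

lemma log_surplus_comp: "log_surplus N (\<lambda>x. U (f x)) (\<lambda>x. V (f x)) x = log_surplus N U V (f x)"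
  by (simp add: log_surplus_def)

lemma log_surplus_attains_max:
  fixes U V :: "'a::t2_space \<Rightarrow> real"
  assumes K: "compact K" "K \<noteq> {}"
    and cont: "continuous_on K U" "continuous_on K V"
    and V_nonneg: "\<And>x. x \<in> K \<Longrightarrow> 0 \<le> V x"
    and N: "0 < N"
  shows "\<exists>x\<in>K. \<forall>y\<in>K. log_surplus N U V y \<le> log_surplus N U V x"
proof (cases "\<exists>x0\<in>K. 0 < U x0")
  case False
  then show ?thesis
    using K(2) by (auto simp: log_surplus_def)
next
  case True
  then obtain x0 where x0: "x0 \<in> K" "0 < U x0" by blast
  define f where "f x = N * ln (U x) - V x" for x
  define \<delta> where "\<delta> = exp (f x0 / N)"
  have \<delta>_pos: "0 < \<delta>"
    by (simp add: \<delta>_def)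
  have "f x0 / N \<le> ln (U x0)"
    using V_nonneg[OF x0(1)] N by (simp add: f_def field_simps)
  then have \<delta>_le: "\<delta> \<le> U x0"
    using x0(2) by (simp add: \<delta>_def ln_ge_iff)
  \<comment> \<open>Points with \<open>U < \<delta>\<close> lose to \<open>x0\<close>, so it suffices to maximise over \<open>K \<inter> {U \<ge> \<delta>}\<close>.\<close>
  define K' where "K' = K \<inter> U -` {\<delta>..}"
  have "compact K'"
    using continuous_closed_preimage[OF cont(1) compact_imp_closed[OF K(1)]] K(1)
    unfolding K'_def by (metis compact_Int_closed closed_atLeast inf.idem inf_assoc)
  moreover have "x0 \<in> K'"
    using x0 \<delta>_le by (simp add: K'_def)
  moreover have "continuous_on K' f"
  proof -
    have "continuous_on K' U" "continuous_on K' V"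
      using cont by (auto intro: continuous_on_subset simp: K'_def)
    moreover have "\<forall>x\<in>K'. U x \<noteq> 0"
      using \<delta>_pos by (auto simp: K'_def)
    ultimately show ?thesis
      unfolding f_def by (intro continuous_intros)
  qed
  ultimately obtain xm where xm: "xm \<in> K'" "\<And>y. y \<in> K' \<Longrightarrow> f y \<le> f xm"
    using continuous_attains_sup[of K' f] by blast
  have U_xm: "0 < U xm"
    using xm(1) \<delta>_pos by (auto simp: K'_def)
  have "log_surplus N U V y \<le> log_surplus N U V xm" if y: "y \<in> K" for y
  proof (cases "0 < U y")
    case True
    have "f y \<le> f xm"
    proof (cases "\<delta> \<le> U y")
      case True
      then show ?thesis using xm(2) y by (simp add: K'_def)
    next
      case False
      then have "N * ln (U y) < N * ln \<delta>"
        using \<open>0 < U y\<close> N by simp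
      also have "N * ln \<delta> = f x0"
        using N by (simp add: \<delta>_def)
      finally show ?thesis
        using V_nonneg[OF y] xm(2)[OF \<open>x0 \<in> K'\<close>] by (simp add: f_def)
    qed
    then show ?thesis
      using True U_xm by (simp add: log_surplus_def f_def)
  qed (simp add: log_surplus_def)
  then show ?thesis
    using xm(1) by (auto simp: K'_def)
qed

lemma trip_nonneg:
  assumes "\<And>i j. 0 \<le> b i j" and "\<And>i j. 0 \<le> t i j"
  shows "0 \<le> trip b t \<alpha>"
  unfolding trip_def qq_def bsum_def using assms
  by (intro sum_nonneg mult_nonneg_nonneg divide_nonneg_nonneg)

lemma tau_dr_nonneg:
  assumes "\<And>i j. 0 \<le> b i j" and "\<And>i j. 0 \<le> t i j"
  shows "0 \<le> tau_dr b t i \<alpha>"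
  unfolding tau_dr_def by (simp add: add_nonneg_nonneg assms trip_nonneg[OF assms])

definition trip_volume ::
    "('l::finite \<Rightarrow> 'l \<Rightarrow> real) \<Rightarrow> ('l \<Rightarrow> 'l \<Rightarrow> real) \<Rightarrow> ('l \<Rightarrow> 'l \<Rightarrow> real) \<Rightarrow> real"
  where "trip_volume b t x = (\<Sum>i\<in>UNIV. \<Sum>\<alpha>\<in>UNIV. trip b t \<alpha> * x i \<alpha>)"

definition drive_time ::
    "('l::finite \<Rightarrow> 'l \<Rightarrow> real) \<Rightarrow> ('l \<Rightarrow> 'l \<Rightarrow> real) \<Rightarrow> ('l \<Rightarrow> 'l \<Rightarrow> real) \<Rightarrow> real"
  where "drive_time b t x = (\<Sum>i\<in>UNIV. \<Sum>\<alpha>\<in>UNIV. tau_dr b t i \<alpha> * x i \<alpha>)"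

definition cv_income :: "real \<Rightarrow> real \<Rightarrow> real \<Rightarrow> ('l::finite \<Rightarrow> 'l \<Rightarrow> real) \<Rightarrow> ('l \<Rightarrow> 'l \<Rightarrow> real)
    \<Rightarrow> ('l \<Rightarrow> 'l \<Rightarrow> real) \<Rightarrow> real"
  where "cv_income p c R b t x = (\<Sum>i\<in>UNIV. \<Sum>\<alpha>\<in>UNIV. rC p c R b t i \<alpha> * x i \<alpha>)"

lemma cv_income_eq: "cv_income p c R b t x = p * (1 - R) * trip_volume b t x - c * drive_time b t x"
  unfolding cv_income_def trip_volume_def drive_time_def rC_def
  by (simp add: sum_subtractf sum_distrib_left sum.distrib algebra_simps)

lemma cv_obj_eq_log_surplus:
  "cv_obj p c R b t N = log_surplus N (cv_income p c R b t) (drive_time b t)"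
  by (simp add: fun_eq_iff cv_obj_def log_surplus_def cv_income_def drive_time_def Let_def)

lemma cv_pi_eq: "cv_pi p c R b t N bC = p * R * trip_volume b t (SOME x. cv_optimal p c R b t N bC x)"
  unfolding cv_pi_def trip_volume_def rC2P_def Let_def by (simp add: sum_distrib_left mult.assoc)

lemma drive_time_nonneg:
  assumes "\<And>i \<alpha>. 0 \<le> tau_dr b t i \<alpha>" and "\<And>i \<alpha>. 0 \<le> x i \<alpha>"
  shows "0 \<le> drive_time b t x"
  unfolding drive_time_def using assms by (intro sum_nonneg mult_nonneg_nonneg)

(* Flows are moved to the Euclidean space real^('l \<times> 'l), where Heine-Borel applies. *)
definition flow_of_vec :: "real^('l::finite \<times> 'l) \<Rightarrow> 'l \<Rightarrow> 'l \<Rightarrow> real"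
  where "flow_of_vec X i \<alpha> = X $ (i, \<alpha>)"

definition vec_of_flow :: "('l::finite \<Rightarrow> 'l \<Rightarrow> real) \<Rightarrow> real^('l \<times> 'l)"
  where "vec_of_flow x = (\<chi> k. x (fst k) (snd k))"

lemma flow_of_vec_of_flow [simp]: "flow_of_vec (vec_of_flow x) = x"
  by (simp add: fun_eq_iff flow_of_vec_def vec_of_flow_def)

lemma compact_cv_feasible: "compact {X. cv_feasible b bC (flow_of_vec X)}"
proof (unfold compact_eq_bounded_closed, intro conjI)
  have "X \<in> cbox 0 (\<chi> k. bC (snd k))" if F: "cv_feasible b bC (flow_of_vec X)" for X
  proof -
    have "0 \<le> X $ (i, \<alpha>) \<and> X $ (i, \<alpha>) \<le> bC \<alpha>" for i \<alpha>
    proof -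
      have nonneg: "0 \<le> X $ (j, \<alpha>)" for j
        using F by (simp add: cv_feasible_def flow_of_vec_def)
      have "X $ (i, \<alpha>) \<le> (\<Sum>j\<in>UNIV. X $ (j, \<alpha>))"
        using nonneg by (intro member_le_sum) auto
      also have "\<dots> \<le> bC \<alpha>"
        using F by (simp add: cv_feasible_def flow_of_vec_def)
      finally show ?thesis using nonneg by simp
    qed
    then show ?thesis by (simp add: mem_box_cart)
  qed
  then have "{X. cv_feasible b bC (flow_of_vec X)} \<subseteq> cbox 0 (\<chi> k. bC (snd k))"
    by blast
  then show "bounded {X. cv_feasible b bC (flow_of_vec X)}"
    using bounded_cbox bounded_subset by blast
  show "closed {X. cv_feasible b bC (flow_of_vec X)}"
    unfolding cv_feasible_def flow_balance_def flow_of_vec_def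
    by (intro closed_Collect_conj closed_Collect_all closed_Collect_le closed_Collect_eq
        continuous_intros)
qed

lemma cv_optimal_exists:
  fixes b t :: "'l::finite \<Rightarrow> 'l \<Rightarrow> real"
  assumes bC: "\<And>i. 0 \<le> bC i" and N: "0 < N"
    and tau: "\<And>i \<alpha>. 0 \<le> tau_dr b t i \<alpha>"
  shows "\<exists>x. cv_optimal p c R b t N bC x"
proof -
  define K where "K = {X. cv_feasible b bC (flow_of_vec X)}"
  have "vec_of_flow (\<lambda>i \<alpha>. 0) \<in> K"
    using bC by (simp add: K_def cv_feasible_def flow_balance_def)
  moreover have "continuous_on K (\<lambda>X. cv_income p c R b t (flow_of_vec X))"
    "continuous_on K (\<lambda>X. drive_time b t (flow_of_vec X))"
    unfolding cv_income_def drive_time_def flow_of_vec_def by (intro continuous_intros)+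
  moreover have "0 \<le> drive_time b t (flow_of_vec X)" if "X \<in> K" for X
    using that tau by (intro drive_time_nonneg) (auto simp: K_def cv_feasible_def)
  ultimately have "\<exists>X\<in>K. \<forall>Y\<in>K.
      log_surplus N (\<lambda>X. cv_income p c R b t (flow_of_vec X)) (\<lambda>X. drive_time b t (flow_of_vec X)) Y
      \<le> log_surplus N (\<lambda>X. cv_income p c R b t (flow_of_vec X)) (\<lambda>X. drive_time b t (flow_of_vec X)) X"
    using compact_cv_feasible[of b bC, folded K_def] N by (intro log_surplus_attains_max) auto
  then obtain Xm where Xm: "Xm \<in> K"
    and max: "\<And>Y. Y \<in> K \<Longrightarrow> cv_obj p c R b t N (flow_of_vec Y) \<le> cv_obj p c R b t N (flow_of_vec Xm)"
    unfolding log_surplus_comp cv_obj_eq_log_surplus[symmetric] by blast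
  have "cv_obj p c R b t N y \<le> cv_obj p c R b t N (flow_of_vec Xm)" if "cv_feasible b bC y" for y
    using max[of "vec_of_flow y"] that by (simp add: K_def)
  then have "cv_optimal p c R b t N bC (flow_of_vec Xm)"
    using Xm by (simp add: cv_optimal_def K_def)
  then show ?thesis by blast
qed

lemma tradeoff_maximizers_mono:
  fixes N N' a a' v v' :: real
  assumes "0 \<le> N" "N < N'"
    and opt: "N * a' - v' \<le> N * a - v"
    and opt': "N' * a - v \<le> N' * a' - v'"
  shows "a \<le> a'" and "v \<le> v'"
proof -
  have "0 \<le> (N' - N) * (a' - a)"
    using opt opt' by (simp add: algebra_simps)
  then show "a \<le> a'"
    using \<open>N < N'\<close> by (simp add: zero_le_mult_iff)
  then have "0 \<le> N * (a' - a)"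
    using \<open>0 \<le> N\<close> by simp
  then show "v \<le> v'"
    using opt by (simp add: algebra_simps)
qed

lemma cv_optimal_income_pos:
  assumes "cv_optimal p c R b t N bC x" and "cv_feasible b bC y" and "0 < cv_income p c R b t y"
  shows "0 < cv_income p c R b t x"
  using assms by (force simp: cv_optimal_def cv_obj_eq_log_surplus log_surplus_def split: if_splits)

lemma cv_optimal_eq_feasible_if_no_income:
  assumes "\<And>y. cv_feasible b bC y \<Longrightarrow> cv_income p c R b t y \<le> 0"
  shows "cv_optimal p c R b t N bC = cv_feasible b bC"
proof -
  have "cv_obj p c R b t N y = -\<infinity>" if "cv_feasible b bC y" for y
    using assms[OF that] by (simp add: cv_obj_eq_log_surplus log_surplus_def)
  then show ?thesis
    by (auto simp: fun_eq_iff cv_optimal_def)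
qed

lemma cv_pi_mono_N:
  fixes b t :: "'l::finite \<Rightarrow> 'l \<Rightarrow> real"
  assumes bC: "\<And>i. 0 \<le> bC i" and N: "0 < N" "N \<le> N'"
    and tau: "\<And>i \<alpha>. 0 \<le> tau_dr b t i \<alpha>"
    and p: "0 < p" and c: "0 \<le> c" and R: "0 < R" "R < 1"
  shows "cv_pi p c R b t N bC \<le> cv_pi p c R b t N' bC"
proof (cases "\<exists>y. cv_feasible b bC y \<and> 0 < cv_income p c R b t y")
  case False
  then have "cv_optimal p c R b t N bC = cv_optimal p c R b t N' bC"
    using cv_optimal_eq_feasible_if_no_income by (metis not_less)
  then show ?thesis
    by (simp add: cv_pi_def)
next
  case True
  then obtain y where y: "cv_feasible b bC y" "0 < cv_income p c R b t y" by blast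
  show ?thesis
  proof (cases "N = N'")
    case False
    define x where "x = (SOME x. cv_optimal p c R b t N bC x)"
    define x' where "x' = (SOME x. cv_optimal p c R b t N' bC x)"
    have "0 < N'"
      using N by simp
    have x: "cv_optimal p c R b t N bC x"
      using cv_optimal_exists[OF bC N(1) tau] unfolding x_def by (rule someI_ex)
    have x': "cv_optimal p c R b t N' bC x'"
      using cv_optimal_exists[OF bC \<open>0 < N'\<close> tau] unfolding x'_def by (rule someI_ex)
    let ?U = "cv_income p c R b t" and ?V = "drive_time b t"
    have U: "0 < ?U x" "0 < ?U x'"
      using cv_optimal_income_pos[OF _ y] x x' by auto
    have "cv_obj p c R b t N x' \<le> cv_obj p c R b t N x"
      using x x' by (simp add: cv_optimal_def)
    moreover have "cv_obj p c R b t N' x \<le> cv_obj p c R b t N' x'"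
      using x x' by (simp add: cv_optimal_def)
    ultimately have opt: "N * ln (?U x') - ?V x' \<le> N * ln (?U x) - ?V x"
      and opt': "N' * ln (?U x) - ?V x \<le> N' * ln (?U x') - ?V x'"
      using U by (simp_all add: cv_obj_eq_log_surplus log_surplus_def)
    have "N < N'"
      using N False by simp
    then have "ln (?U x) \<le> ln (?U x')" and V: "?V x \<le> ?V x'"
      using tradeoff_maximizers_mono[OF _ _ opt opt'] N by auto
    then have "?U x \<le> ?U x'"
      using U by simp
    then have "p * (1 - R) * trip_volume b t x \<le> p * (1 - R) * trip_volume b t x'"
      using mult_left_mono[OF V c] unfolding cv_income_eq by linarith
    then have "trip_volume b t x \<le> trip_volume b t x'"
      using p R by simp
    then show ?thesis
      unfolding cv_pi_eq x_def[symmetric] x'_def[symmetric] using p R by simp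
  qed simp
qed

lemma sum_weighted_le_column_bound:
  fixes w x :: "'l::finite \<Rightarrow> 'l \<Rightarrow> real" and B :: "'l \<Rightarrow> real"
  assumes x_nonneg: "\<And>i \<alpha>. 0 \<le> x i \<alpha>" and column: "\<And>\<alpha>. (\<Sum>j\<in>UNIV. x j \<alpha>) \<le> B \<alpha>"
  shows "(\<Sum>i\<in>UNIV. \<Sum>\<alpha>\<in>UNIV. w i \<alpha> * x i \<alpha>) \<le> (\<Sum>i\<in>UNIV. \<Sum>\<alpha>\<in>UNIV. \<bar>w i \<alpha>\<bar> * B \<alpha>)"
proof (intro sum_mono)
  fix i \<alpha>
  have "x i \<alpha> \<le> (\<Sum>j\<in>UNIV. x j \<alpha>)"
    using x_nonneg by (intro member_le_sum) auto
  then have "x i \<alpha> \<le> B \<alpha>"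
    using column order_trans by blast
  have "w i \<alpha> * x i \<alpha> \<le> \<bar>w i \<alpha>\<bar> * x i \<alpha>"
    using x_nonneg by (intro mult_right_mono) auto
  also have "\<dots> \<le> \<bar>w i \<alpha>\<bar> * B \<alpha>"
    using \<open>x i \<alpha> \<le> B \<alpha>\<close> by (intro mult_left_mono) auto
  finally show "w i \<alpha> * x i \<alpha> \<le> \<bar>w i \<alpha>\<bar> * B \<alpha>" .
qed

lemma opt_obj_le:
  fixes b t :: "'l::finite \<Rightarrow> 'l \<Rightarrow> real"
  assumes F: "opt_feasible b t M bC xA" and N: "0 < N"
    and tau: "\<And>i \<alpha>. 0 \<le> tau_dr b t i \<alpha>"
  shows "opt_obj p c R b t N bC xA \<le>
    (\<Sum>i\<in>UNIV. \<Sum>\<alpha>\<in>UNIV. \<bar>rA p c b t i \<alpha>\<bar> * bsum b \<alpha>) +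
    (\<Sum>i\<in>UNIV. \<Sum>\<alpha>\<in>UNIV. \<bar>rC2P p R b t i \<alpha>\<bar> * bsum b \<alpha>)"
proof -
  have bC: "\<And>i. 0 \<le> bC i" and xA: "\<And>i \<alpha>. 0 \<le> xA i \<alpha>"
    and capacity: "\<And>\<alpha>. (\<Sum>j\<in>UNIV. xA j \<alpha>) + bC \<alpha> \<le> bsum b \<alpha>"
    using F by (simp_all add: opt_feasible_def)
  have "(\<Sum>j\<in>UNIV. xA j \<alpha>) \<le> bsum b \<alpha>" for \<alpha>
    using capacity[of \<alpha>] bC[of \<alpha>] by linarith
  then have AV: "(\<Sum>i\<in>UNIV. \<Sum>\<alpha>\<in>UNIV. rA p c b t i \<alpha> * xA i \<alpha>)
      \<le> (\<Sum>i\<in>UNIV. \<Sum>\<alpha>\<in>UNIV. \<bar>rA p c b t i \<alpha>\<bar> * bsum b \<alpha>)"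
    by (rule sum_weighted_le_column_bound[OF xA])
  define x where "x = (SOME x. cv_optimal p c R b t N bC x)"
  have "cv_feasible b bC x"
    using cv_optimal_exists[OF bC N tau] unfolding x_def cv_optimal_def by (rule someI2_ex) simp
  moreover have "bC \<alpha> \<le> bsum b \<alpha>" for \<alpha>
  proof -
    have "0 \<le> (\<Sum>j\<in>UNIV. xA j \<alpha>)"
      using xA by (simp add: sum_nonneg)
    then show ?thesis
      using capacity[of \<alpha>] by linarith
  qed
  ultimately have "(\<Sum>i\<in>UNIV. \<Sum>\<alpha>\<in>UNIV. rC2P p R b t i \<alpha> * x i \<alpha>)
      \<le> (\<Sum>i\<in>UNIV. \<Sum>\<alpha>\<in>UNIV. \<bar>rC2P p R b t i \<alpha>\<bar> * bsum b \<alpha>)"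
    by (intro sum_weighted_le_column_bound) (auto simp: cv_feasible_def intro: order_trans)
  then show ?thesis
    using AV by (simp add: opt_obj_def cv_pi_def x_def Let_def)
qed

lemma bdd_above_opt_obj:
  fixes b t :: "'l::finite \<Rightarrow> 'l \<Rightarrow> real"
  assumes "0 < N" and "\<And>i \<alpha>. 0 \<le> tau_dr b t i \<alpha>"
  shows "bdd_above {opt_obj p c R b t N bC xA | bC xA. opt_feasible b t M bC xA}"
  using opt_obj_le[OF _ assms] unfolding bdd_above_def by blast

lemma opt_feasible_zero:
  assumes "0 \<le> M" and "\<And>i j. 0 \<le> b i j"
  shows "opt_feasible b t M (\<lambda>i. 0) (\<lambda>i \<alpha>. 0)"
  using assms by (simp add: opt_feasible_def flow_balance_def bsum_def sum_nonneg)

lemma opt_objs_nonempty: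
  assumes "0 \<le> M" and "\<And>i j. 0 \<le> b i j"
  shows "{opt_obj p c R b t N bC xA | bC xA. opt_feasible b t M bC xA} \<noteq> {}"
proof -
  have "opt_feasible b t M (\<lambda>i. 0) (\<lambda>i \<alpha>. 0)"
    using assms by (rule opt_feasible_zero)
  then show ?thesis
    by blast
qed

lemma opt_feasible_mono:
  "opt_feasible b t M bC xA \<Longrightarrow> M \<le> M' \<Longrightarrow> opt_feasible b t M' bC xA"
  unfolding opt_feasible_def by auto

lemma opt_value_mono_M:
  fixes b t :: "'l::finite \<Rightarrow> 'l \<Rightarrow> real"
  assumes "0 \<le> M" "M \<le> M'" and N: "0 < N"
    and b: "\<And>i j. 0 \<le> b i j" and tau: "\<And>i \<alpha>. 0 \<le> tau_dr b t i \<alpha>"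
  shows "opt_value p c R b t N M \<le> opt_value p c R b t N M'"
  unfolding opt_value_def
proof (rule cSup_subset_mono)
  show "{opt_obj p c R b t N bC xA | bC xA. opt_feasible b t M bC xA} \<noteq> {}"
    using \<open>0 \<le> M\<close> b by (rule opt_objs_nonempty)
  show "bdd_above {opt_obj p c R b t N bC xA | bC xA. opt_feasible b t M' bC xA}"
    using bdd_above_opt_obj[OF N tau] .
  show "{opt_obj p c R b t N bC xA | bC xA. opt_feasible b t M bC xA}
      \<subseteq> {opt_obj p c R b t N bC xA | bC xA. opt_feasible b t M' bC xA}"
    using opt_feasible_mono \<open>M \<le> M'\<close> by blast
qed

lemma opt_value_mono_N:
  fixes b t :: "'l::finite \<Rightarrow> 'l \<Rightarrow> real"
  assumes "0 \<le> M" and N: "0 < N" "N \<le> N'"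
    and b: "\<And>i j. 0 \<le> b i j" and tau: "\<And>i \<alpha>. 0 \<le> tau_dr b t i \<alpha>"
    and p: "0 < p" and c: "0 \<le> c" and R: "0 < R" "R < 1"
  shows "opt_value p c R b t N M \<le> opt_value p c R b t N' M"
  unfolding opt_value_def
proof (rule cSup_mono)
  show "{opt_obj p c R b t N bC xA | bC xA. opt_feasible b t M bC xA} \<noteq> {}"
    using \<open>0 \<le> M\<close> b by (rule opt_objs_nonempty)
  show "bdd_above {opt_obj p c R b t N' bC xA | bC xA. opt_feasible b t M bC xA}"
    using N by (intro bdd_above_opt_obj tau) simp
  fix s assume "s \<in> {opt_obj p c R b t N bC xA | bC xA. opt_feasible b t M bC xA}"
  then obtain bC xA where s: "s = opt_obj p c R b t N bC xA" and F: "opt_feasible b t M bC xA"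
    by blast
  have "cv_pi p c R b t N bC \<le> cv_pi p c R b t N' bC"
    using F by (intro cv_pi_mono_N N tau p c R) (simp add: opt_feasible_def)
  then have "s \<le> opt_obj p c R b t N' bC xA"
    by (simp add: s opt_obj_def)
  then show "\<exists>s'\<in>{opt_obj p c R b t N' bC xA | bC xA. opt_feasible b t M bC xA}. s \<le> s'"
    using F by blast
qed

theorem lemma2:
  fixes b t :: "'l::finite \<Rightarrow> 'l \<Rightarrow> real"
    and p c R N M :: real
  assumes b_nonneg: "\<And>i j. 0 \<le> b i j"
    and b_pos: "\<And>i. 0 < bsum b i"
    and t_pos: "\<And>i j. i \<noteq> j \<Longrightarrow> 0 < t i j"
    and t_diag: "\<And>i. t i i = 0"
    and p_pos: "0 < p" and c_nonneg: "0 \<le> c"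
    and R_pos: "0 < R" and R_lt1: "R < 1"
    and N_pos: "0 < N" and M_nonneg: "0 \<le> M"
  shows "mono_on {0..} (\<lambda>M'. opt_value p c R b t N M') \<and>
         mono_on {0<..} (\<lambda>N'. opt_value p c R b t N' M)"
proof -
  have t_nonneg: "0 \<le> t i j" for i j
    using t_pos[of i j] t_diag[of i] by (cases "i = j") auto
  have tau: "0 \<le> tau_dr b t i \<alpha>" for i \<alpha>
    by (rule tau_dr_nonneg[OF b_nonneg t_nonneg])
  show ?thesis
  proof (intro conjI mono_onI)
    fix M1 M2 :: real
    assume "M1 \<in> {0..}" "M1 \<le> M2"
    then show "opt_value p c R b t N M1 \<le> opt_value p c R b t N M2"
      by (intro opt_value_mono_M N_pos b_nonneg tau) simp_all
  next
    fix N1 N2 :: real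
    assume "N1 \<in> {0<..}" "N1 \<le> N2"
    then show "opt_value p c R b t N1 M \<le> opt_value p c R b t N2 M"
      by (intro opt_value_mono_N M_nonneg b_nonneg tau p_pos c_nonneg R_pos R_lt1) simp_all
  qed
qed

end
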